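(* Let $r\ge 1$ and let $M_s=(V_s=\{s_1,\dots,s_r\},w_s)$ and $M_t=(V_t=\{t_1,\dots,t_r\},w_t)$ be metric spaces. Define $M_{st}=(\{1,\dots,r\},l)$ with $l(i,j)\coloneqq w_s(s_i,s_j)+w_t(t_i,t_j)$. Let $T^*_s$ be a minimum-weight TSP tour in $M_s$ and $T^*_t$ a minimum-weight TSP tour in $M_t$. Then there exists a TSP tour $T$ in $M_{st}$ with $$l(T)\le 2\sqrt{r-1}\,\big(w_s(T^*_s)+w_t(T^*_t)\big).$$
   Context: A TSP tour in a finite metric space on a point set $P$ is a cyclic ordering $v_1v_2\dots v_k$ of all points of $P$ (each exactly once); its weight is the sum of the distances $d(v_1,v_2)+d(v_2,v_3)+\dots+d(v_{k-1},v_k)+d(v_k,v_1)$. *)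

theory Defs
  imports Complex_Main
begin

definition metric_on :: "'a set \<Rightarrow> ('a \<Rightarrow> 'a \<Rightarrow> real) \<Rightarrow> bool" where
  "metric_on V d \<longleftrightarrow>
     (\<forall>x\<in>V. \<forall>y\<in>V. 0 \<le> d x y \<and> (d x y = 0 \<longleftrightarrow> x = y) \<and> d x y = d y x) \<and>
     (\<forall>x\<in>V. \<forall>y\<in>V. \<forall>z\<in>V. d x z \<le> d x y + d y z)"

definition is_tour :: "'a set \<Rightarrow> 'a list \<Rightarrow> bool" where
  "is_tour P T \<longleftrightarrow> distinct T \<and> set T = P"

definition tour_weight :: "('a \<Rightarrow> 'a \<Rightarrow> real) \<Rightarrow> 'a list \<Rightarrow> real" where
  "tour_weight d T = (\<Sum>i<length T. d (T ! i) (T ! ((i + 1) mod length T)))"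

definition min_tour :: "'a set \<Rightarrow> ('a \<Rightarrow> 'a \<Rightarrow> real) \<Rightarrow> 'a list \<Rightarrow> bool" where
  "min_tour P d T \<longleftrightarrow> is_tour P T \<and> (\<forall>T'. is_tour P T' \<longrightarrow> tour_weight d T \<le> tour_weight d T')"

end

theory Submission
  imports Defs "HOL-Library.Product_Lexorder"
begin

text \<open>Walking along the tour Ts assigns to each point s_i its distance x_i from the start,
  measured along the tour; then x_i lies in [0, w_s(Ts)] and w_s(s_i, s_j) \<le> |x_i - x_j| by the
  triangle inequality. Doing the same with Tt, it suffices to find a short tour through r points
  of the box [0,X] \<times> [0,Y] in the l1 metric. Cut the box into k = \<lceil>\<surd>(r-1)\<rceil> vertical strips
  and visit the strips from left to right, alternately going up and down: the horizontal moves cost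
  at most ((r-2)/k + 2) X and the vertical ones (k+1) Y. The same construction with horizontal strips
  gives the bound with X and Y exchanged, and the better of the two tours is within the average,
  which is at most 2 \<surd>(r-1) (X + Y).\<close>

lemma tour_weight_conv_path_sum:
  assumes "length T = Suc m"
  shows "tour_weight d T = (\<Sum>i<m. d (T ! i) (T ! Suc i)) + d (T ! m) (T ! 0)"
proof -
  have "tour_weight d T = (\<Sum>i<Suc m. d (T ! i) (T ! (Suc i mod Suc m)))"
    unfolding tour_weight_def assms by simp
  also have "\<dots> = (\<Sum>i<m. d (T ! i) (T ! (Suc i mod Suc m))) + d (T ! m) (T ! 0)"
    by simp
  also have "(\<Sum>i<m. d (T ! i) (T ! (Suc i mod Suc m))) = (\<Sum>i<m. d (T ! i) (T ! Suc i))"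
    by (rule sum.cong) auto
  finally show ?thesis .
qed

lemma tour_weight_mono:
  assumes "\<And>i j. i \<in> set T \<Longrightarrow> j \<in> set T \<Longrightarrow> d i j \<le> e i j"
  shows "tour_weight d T \<le> tour_weight e T"
  unfolding tour_weight_def
proof (rule sum_mono)
  fix i assume "i \<in> {..<length T}"
  then have "i < length T" "(i + 1) mod length T < length T"
    by (auto intro: mod_less_divisor)
  then have "T ! i \<in> set T" "T ! ((i + 1) mod length T) \<in> set T" by simp_all
  then show "d (T ! i) (T ! ((i + 1) mod length T)) \<le> e (T ! i) (T ! ((i + 1) mod length T))"
    by (rule assms)
qed

lemma metric_on_dist_le_path_sum:
  assumes "metric_on V d" and "set L \<subseteq> V" and "a \<le> b" and "b < length L"
  shows "d (L ! a) (L ! b) \<le> (\<Sum>j=a..<b. d (L ! j) (L ! Suc j))"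
  using assms(3,4)
proof (induction b)
  case 0
  then show ?case
    using assms(1,2) nth_mem unfolding metric_on_def by fastforce
next
  case (Suc b)
  show ?case
  proof (cases "a = Suc b")
    case True
    then show ?thesis
      using assms(1,2) Suc.prems nth_mem unfolding metric_on_def by fastforce
  next
    case False
    then have "a \<le> b" using Suc.prems by simp
    have "d (L ! a) (L ! Suc b) \<le> d (L ! a) (L ! b) + d (L ! b) (L ! Suc b)"
      using assms(1,2) Suc.prems \<open>a \<le> b\<close> nth_mem unfolding metric_on_def
      by (metis Suc_lessD order.strict_trans1 subset_iff)
    also have "\<dots> \<le> (\<Sum>j=a..<Suc b. d (L ! j) (L ! Suc j))"
      using Suc.IH \<open>a \<le> b\<close> Suc.prems by simp
    finally show ?thesis .
  qed
qed

lemma tour_line_embedding: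
  assumes met: "metric_on V d" and tour: "is_tour V L"
  obtains c where "\<forall>u\<in>V. 0 \<le> c u \<and> c u \<le> tour_weight d L"
    and "\<forall>u\<in>V. \<forall>v\<in>V. d u v \<le> \<bar>c u - c v\<bar>"
proof -
  let ?n = "length L"
  have LV: "set L = V" using tour unfolding is_tour_def by simp
  have dist_nonneg: "0 \<le> d (L ! j) (L ! k)" if "j < ?n" "k < ?n" for j k
    using met LV that nth_mem unfolding metric_on_def by blast
  have "\<forall>u\<in>V. \<exists>j. j < ?n \<and> L ! j = u"
    using LV by (auto simp: in_set_conv_nth)
  then obtain idx where idx: "\<forall>u\<in>V. idx u < ?n \<and> L ! idx u = u"
    by metis
  define c where "c u = (\<Sum>j<idx u. d (L ! j) (L ! Suc j))" for u
  have "0 \<le> c u \<and> c u \<le> tour_weight d L" if "u \<in> V" for u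
  proof
    show "0 \<le> c u"
      unfolding c_def using idx that by (intro sum_nonneg dist_nonneg) auto
    have "c u = (\<Sum>j<idx u. d (L ! j) (L ! ((j + 1) mod ?n)))"
      unfolding c_def using idx that by (intro sum.cong) auto
    also have "\<dots> \<le> tour_weight d L"
      unfolding tour_weight_def using idx that
      by (intro sum_mono2 dist_nonneg) (auto intro: mod_less_divisor)
    finally show "c u \<le> tour_weight d L" .
  qed
  moreover have "d u v \<le> \<bar>c u - c v\<bar>" if "u \<in> V" "v \<in> V" for u v
  proof -
    have "d u v \<le> c v - c u" if "u \<in> V" "v \<in> V" "idx u \<le> idx v" for u v
    proof -
      have "d u v = d (L ! idx u) (L ! idx v)" using idx that by simp
      also have "\<dots> \<le> (\<Sum>j=idx u..<idx v. d (L ! j) (L ! Suc j))"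
        using idx that met LV by (intro metric_on_dist_le_path_sum) auto
      also have "\<dots> = c v - c u"
        unfolding c_def lessThan_atLeast0 using that(3) by (simp add: sum_diff_nat_ivl)
      finally show ?thesis .
    qed
    moreover have "d u v = d v u" using met that unfolding metric_on_def by blast
    ultimately show ?thesis using that by (smt (verit) linorder_le_cases)
  qed
  ultimately show ?thesis using that by blast
qed

definition l1_dist :: "real \<times> real \<Rightarrow> real \<times> real \<Rightarrow> real" where
  "l1_dist p q = \<bar>fst p - fst q\<bar> + \<bar>snd p - snd q\<bar>"

text \<open>The right boundary x = X belongs to the last strip; for X = 0, where division yields 0,
  every point lies in strip 0.\<close>
definition strip_of :: "real \<Rightarrow> nat \<Rightarrow> real \<Rightarrow> nat" where
  "strip_of X k x = min (k - 1) (nat \<lfloor>x * k / X\<rfloor>)"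

lemma strip_of_less: "k \<ge> 1 \<Longrightarrow> strip_of X k x < k"
  unfolding strip_of_def by simp

lemma strip_of_bounds:
  assumes "k \<ge> 1" and "0 \<le> x" and "x \<le> X"
  shows "real (strip_of X k x) * (X / k) \<le> x" and "x \<le> (real (strip_of X k x) + 1) * (X / k)"
proof -
  have k: "real k > 0" using assms(1) by simp
  have "real (strip_of X k x) * (X / k) \<le> x \<and> x \<le> (real (strip_of X k x) + 1) * (X / k)"
  proof (cases "X = 0")
    case True
    then show ?thesis using assms unfolding strip_of_def by simp
  next
    case False
    then have X: "X > 0" using assms by simp
    define f where "f = \<lfloor>x * k / X\<rfloor>"
    have "real_of_int f \<le> x * k / X" "x * k / X < real_of_int f + 1"
      unfolding f_def by linarith+
    then have f: "real_of_int f * X \<le> x * k" "x * k < (real_of_int f + 1) * X"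
      using X by (simp_all add: pos_le_divide_eq pos_divide_less_eq)
    have "0 \<le> f" using assms X k by (simp add: f_def)
    show ?thesis
    proof (cases "nat f \<le> k - 1")
      case True
      then have "real (strip_of X k x) = real_of_int f"
        using \<open>0 \<le> f\<close> unfolding strip_of_def f_def by simp
      then show ?thesis using f k by (simp add: field_simps)
    next
      case False
      then have strip: "real (strip_of X k x) = real k - 1"
        using assms(1) unfolding strip_of_def f_def by (simp add: of_nat_diff)
      have "real k * X \<le> real_of_int f * X" using False X by (intro mult_right_mono) linarith+
      then have "X * real k \<le> x * real k" using f(1) by (simp add: mult.commute)
      then have "x = X" using k assms(3) by simp
      moreover have "(real k - 1) * (X / k) \<le> X" using k X by (simp add: field_simps)
      ultimately show ?thesis using strip k by simp
    qed
  qed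
  then show "real (strip_of X k x) * (X / k) \<le> x" and "x \<le> (real (strip_of X k x) + 1) * (X / k)"
    by simp_all
qed

text \<open>Sorting points by this key runs through the strips from left to right, upwards in the
  even-numbered strips and downwards in the odd-numbered ones.\<close>
definition snake_key :: "real \<Rightarrow> real \<Rightarrow> nat \<Rightarrow> real \<times> real \<Rightarrow> nat \<times> real" where
  "snake_key X Y k p =
     (let b = strip_of X k (fst p) in (b, if even b then snd p else Y - snd p))"

definition snake_potential :: "real \<Rightarrow> real \<Rightarrow> nat \<Rightarrow> real \<times> real \<Rightarrow> real" where
  "snake_potential X Y k p =
     real (fst (snake_key X Y k p)) * (X / k + Y) + snd (snake_key X Y k p)"

lemma l1_dist_le_snake_potential_diff:
  assumes k: "k \<ge> 1" and box: "p \<in> {0..X} \<times> {0..Y}" "q \<in> {0..X} \<times> {0..Y}"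
    and key: "snake_key X Y k p \<le> snake_key X Y k q"
  shows "l1_dist p q \<le> X / k + (snake_potential X Y k q - snake_potential X Y k p)"
proof -
  define b1 where "b1 = strip_of X k (fst p)"
  define b2 where "b2 = strip_of X k (fst q)"
  define z1 where "z1 = snd (snake_key X Y k p)"
  define z2 where "z2 = snd (snake_key X Y k q)"
  have z: "z1 = (if even b1 then snd p else Y - snd p)" "z2 = (if even b2 then snd q else Y - snd q)"
    unfolding z1_def z2_def b1_def b2_def snake_key_def by simp_all
  have "(b1, z1) \<le> (b2, z2)"
    using key unfolding b1_def b2_def z1_def z2_def snake_key_def by (simp add: Let_def)
  then have b12: "b1 < b2 \<or> b1 = b2 \<and> z1 \<le> z2" by (auto simp: less_eq_prod_def)
  have "real b1 * (X / k) \<le> real b2 * (X / k)"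
    using b12 box k by (intro mult_right_mono) auto
  then have x_step: "\<bar>fst p - fst q\<bar> \<le> X / k + (real b2 - real b1) * (X / k)"
    using strip_of_bounds[OF k, of "fst p" X] strip_of_bounds[OF k, of "fst q" X] box
    unfolding b1_def b2_def by (auto simp: algebra_simps abs_if)
  have y_step: "\<bar>snd p - snd q\<bar> \<le> (real b2 - real b1) * Y + (z2 - z1)"
  proof (cases "b1 = b2")
    case True
    then show ?thesis using b12 z by (auto split: if_splits)
  next
    case False
    then have "b1 < b2" using b12 by simp
    show ?thesis
    proof (cases "even b1 = even b2")
      case True
      then have "b2 \<noteq> Suc b1" by auto
      then have "real b2 - real b1 \<ge> 2" using \<open>b1 < b2\<close> by linarith
      then have "(real b2 - real b1) * Y \<ge> 2 * Y" using box by (intro mult_right_mono) auto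
      then show ?thesis using z box by (auto split: if_splits)
    next
      case False
      have "real b2 - real b1 \<ge> 1" using \<open>b1 < b2\<close> by simp
      then have "1 * Y \<le> (real b2 - real b1) * Y" using box by (intro mult_right_mono) auto
      then show ?thesis using False z box by (auto split: if_splits)
    qed
  qed
  have "snake_potential X Y k q - snake_potential X Y k p
      = (real b2 - real b1) * (X / k) + (real b2 - real b1) * Y + (z2 - z1)"
    unfolding snake_potential_def b1_def b2_def z1_def z2_def snake_key_def
    by (simp add: Let_def algebra_simps)
  then show ?thesis using x_step y_step unfolding l1_dist_def by linarith
qed

lemma snake_potential_bounds:
  assumes k: "k \<ge> 1" and box: "p \<in> {0..X} \<times> {0..Y}"
  shows "0 \<le> snake_potential X Y k p" and "snake_potential X Y k p \<le> (real k - 1) * (X / k + Y) + Y"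
proof -
  define b where "b = strip_of X k (fst p)"
  have w: "0 \<le> X / k + Y" using box by auto
  have z: "snd (snake_key X Y k p) \<in> {0..Y}"
    using box unfolding snake_key_def by (auto simp: Let_def)
  have "Suc b \<le> k" using strip_of_less[OF k] unfolding b_def by (simp add: Suc_le_eq)
  then have "real b \<le> real k - 1" by linarith
  then have "real b * (X / k + Y) \<le> (real k - 1) * (X / k + Y)" using w by (rule mult_right_mono)
  moreover have "snake_potential X Y k p = real b * (X / k + Y) + snd (snake_key X Y k p)"
    unfolding snake_potential_def b_def by (simp add: snake_key_def Let_def)
  ultimately show "0 \<le> snake_potential X Y k p" "snake_potential X Y k p \<le> (real k - 1) * (X / k + Y) + Y"
    using w z by auto
qed

lemma snake_tour:
  fixes p :: "'a \<Rightarrow> real \<times> real" and k :: nat and X Y :: real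
  assumes "finite P" and card: "card P = Suc m" and k: "k \<ge> 1"
    and box: "p ` P \<subseteq> {0..X} \<times> {0..Y}"
  obtains T where "is_tour P T"
    and "tour_weight (\<lambda>i j. l1_dist (p i) (p j)) T \<le> ((real m - 1) / k + 2) * X + (real k + 1) * Y"
proof -
  let ?\<Phi> = "\<lambda>i. snake_potential X Y k (p i)"
  obtain xs where xs: "set xs = P" "distinct xs"
    using finite_distinct_list[OF \<open>finite P\<close>] by blast
  define T where "T = sort_key (\<lambda>i. snake_key X Y k (p i)) xs"
  have tour: "is_tour P T" unfolding is_tour_def T_def using xs by simp
  have len: "length T = Suc m" using xs card distinct_card unfolding T_def by fastforce
  have T_box: "p (T ! i) \<in> {0..X} \<times> {0..Y}" if "i \<le> m" for i
    using tour len that box nth_mem unfolding is_tour_def by (metis image_subset_iff le_imp_less_Suc)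
  have "sorted (map (\<lambda>i. snake_key X Y k (p i)) T)" unfolding T_def by simp
  then have "snake_key X Y k (p (T ! i)) \<le> snake_key X Y k (p (T ! Suc i))" if "i < m" for i
    using that len by (simp add: sorted_iff_nth_mono)
  then have "l1_dist (p (T ! i)) (p (T ! Suc i)) \<le> X / k + (?\<Phi> (T ! Suc i) - ?\<Phi> (T ! i))"
    if "i < m" for i
    using that T_box by (intro l1_dist_le_snake_potential_diff k) auto
  then have "(\<Sum>i<m. l1_dist (p (T ! i)) (p (T ! Suc i)))
      \<le> (\<Sum>i<m. X / k + (?\<Phi> (T ! Suc i) - ?\<Phi> (T ! i)))"
    by (intro sum_mono) simp
  also have "\<dots> = m * (X / k) + (?\<Phi> (T ! m) - ?\<Phi> (T ! 0))"
    using sum_lessThan_telescope[of "\<lambda>i. ?\<Phi> (T ! i)" m] by (simp add: sum.distrib)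
  finally have path: "(\<Sum>i<m. l1_dist (p (T ! i)) (p (T ! Suc i)))
      \<le> m * (X / k) + (?\<Phi> (T ! m) - ?\<Phi> (T ! 0))" .
  have closing: "l1_dist (p (T ! m)) (p (T ! 0)) \<le> X + Y"
    using T_box[of m] T_box[of 0] unfolding l1_dist_def by (auto simp: abs_if)
  have "tour_weight (\<lambda>i j. l1_dist (p i) (p j)) T
      \<le> real m * (X / k) + (real k - 1) * (X / k + Y) + Y + (X + Y)"
    using tour_weight_conv_path_sum[OF len] path closing
      snake_potential_bounds[OF k T_box[of m]] snake_potential_bounds[OF k T_box[of 0]]
    by simp
  also have "\<dots> = ((real m - 1) / k + 2) * X + (real k + 1) * Y"
    using k by (simp add: field_simps)
  finally show ?thesis using tour that by blast
qed

lemma ceiling_sqrt_strip_count: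
  fixes m :: nat
  assumes "m \<ge> 1"
  defines "k \<equiv> nat \<lceil>sqrt m\<rceil>"
  shows "k \<ge> 1" and "(real m - 1) / k + real k + 3 \<le> 4 * sqrt m"
proof -
  define s where "s = sqrt m"
  have s1: "s \<ge> 1" and ss: "s * s = m" using assms(1) by (simp_all add: s_def)
  have "real k = of_int \<lceil>s\<rceil>" unfolding k_def s_def by simp
  then have ks: "s \<le> real k" "real k < s + 1" by linarith+
  then show "k \<ge> 1" using s1 by linarith
  have "s * s \<le> s * real k" using ks s1 by (intro mult_left_mono) auto
  then have "real m - 1 \<le> s * real k" using ss by linarith
  then have "(real m - 1) / k \<le> s" using \<open>k \<ge> 1\<close> by (simp add: divide_le_eq mult.commute)
  show "(real m - 1) / k + real k + 3 \<le> 4 * sqrt m"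
  proof (cases "s \<ge> 2")
    case True
    then show ?thesis using \<open>(real m - 1) / k \<le> s\<close> ks unfolding s_def by linarith
  next
    case False
    then have "s * s < 2 * 2" using s1 by (intro mult_strict_mono) auto
    then have "m \<in> {1, 2, 3}" using ss assms(1) by auto
    moreover have "k = 1" if "m = 1" using that unfolding k_def by simp
    moreover have "k = 2" if "m \<noteq> 1"
    proof -
      have "1 < s" using that s1 ss by (auto simp: s_def)
      then show ?thesis using ks False by linarith
    qed
    moreover have "(11 / 8 :: real) \<le> sqrt 2" and "(3 / 2 :: real) \<le> sqrt 3"
      by (rule real_le_rsqrt, simp add: power2_eq_square)+
    ultimately show ?thesis by auto
  qed
qed

lemma l1_box_tour:
  fixes p :: "'a \<Rightarrow> real \<times> real" and X Y :: real
  assumes "finite P" and card: "card P = Suc m" and box: "p ` P \<subseteq> {0..X} \<times> {0..Y}"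
  obtains T where "is_tour P T"
    and "tour_weight (\<lambda>i j. l1_dist (p i) (p j)) T \<le> 2 * sqrt m * (X + Y)"
proof (cases "m = 0")
  case True
  then obtain a where "P = {a}" using card card_1_singletonE by auto
  then have "is_tour P [a]" and "tour_weight (\<lambda>i j. l1_dist (p i) (p j)) [a] = 0"
    by (simp_all add: is_tour_def tour_weight_def l1_dist_def)
  then show ?thesis using True that by simp
next
  case False
  define k where "k = nat \<lceil>sqrt m\<rceil>"
  define a where "a = (real m - 1) / k + 2"
  define b where "b = real k + 1"
  have k: "k \<ge> 1" and ab: "a + b \<le> 4 * sqrt m"
    using ceiling_sqrt_strip_count[of m] False unfolding a_def b_def k_def by auto
  obtain u where "u \<in> P" using card by fastforce
  then have "X + Y \<ge> 0" using box by fastforce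
  then have "(a + b) * (X + Y) \<le> 4 * sqrt m * (X + Y)" using ab by (intro mult_right_mono)
  then have sum_le: "(a * X + b * Y) + (a * Y + b * X) \<le> 2 * (2 * sqrt m * (X + Y))"
    by (simp add: algebra_simps)
  obtain T1 where T1: "is_tour P T1" "tour_weight (\<lambda>i j. l1_dist (p i) (p j)) T1 \<le> a * X + b * Y"
    using snake_tour[OF \<open>finite P\<close> card k box] unfolding a_def b_def by blast
  have box': "(prod.swap \<circ> p) ` P \<subseteq> {0..Y} \<times> {0..X}" using box by auto
  have swap: "(\<lambda>i j. l1_dist ((prod.swap \<circ> p) i) ((prod.swap \<circ> p) j)) = (\<lambda>i j. l1_dist (p i) (p j))"
    by (simp add: l1_dist_def add.commute)
  obtain T2 where T2: "is_tour P T2" "tour_weight (\<lambda>i j. l1_dist (p i) (p j)) T2 \<le> a * Y + b * X"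
    using snake_tour[OF \<open>finite P\<close> card k box'] unfolding a_def b_def swap by blast
  show ?thesis
  proof (cases "a * X + b * Y \<le> 2 * sqrt m * (X + Y)")
    case True
    then show ?thesis using T1 that by (meson order_trans)
  next
    case False
    then have "a * Y + b * X \<le> 2 * sqrt m * (X + Y)" using sum_le by linarith
    then show ?thesis using T2 that by (meson order_trans)
  qed
qed

theorem lemma3:
  fixes r :: nat
    and s :: "nat \<Rightarrow> 'a" and ws :: "'a \<Rightarrow> 'a \<Rightarrow> real"
    and t :: "nat \<Rightarrow> 'b" and wt :: "'b \<Rightarrow> 'b \<Rightarrow> real"
    and Ts :: "'a list" and Tt :: "'b list"
  assumes "r \<ge> 1"
    and "inj_on s {1..r}" and "inj_on t {1..r}"
    and "metric_on (s ` {1..r}) ws" and "metric_on (t ` {1..r}) wt"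
    and "min_tour (s ` {1..r}) ws Ts" and "min_tour (t ` {1..r}) wt Tt"
  shows "\<exists>T. is_tour {1..r} T \<and>
           tour_weight (\<lambda>i j. ws (s i) (s j) + wt (t i) (t j)) T
             \<le> 2 * sqrt (real r - 1) * (tour_weight ws Ts + tour_weight wt Tt)"
proof -
  obtain m where r: "r = Suc m" using assms(1) by (cases r) auto
  have "is_tour (s ` {1..r}) Ts" and "is_tour (t ` {1..r}) Tt"
    using assms(6,7) by (simp_all add: min_tour_def)
  then obtain cs ct
    where cs: "\<forall>u\<in>s ` {1..r}. 0 \<le> cs u \<and> cs u \<le> tour_weight ws Ts"
      "\<forall>u\<in>s ` {1..r}. \<forall>v\<in>s ` {1..r}. ws u v \<le> \<bar>cs u - cs v\<bar>"
    and ct: "\<forall>u\<in>t ` {1..r}. 0 \<le> ct u \<and> ct u \<le> tour_weight wt Tt"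
      "\<forall>u\<in>t ` {1..r}. \<forall>v\<in>t ` {1..r}. wt u v \<le> \<bar>ct u - ct v\<bar>"
    using tour_line_embedding[OF assms(4)] tour_line_embedding[OF assms(5)] by metis
  define p where "p i = (cs (s i), ct (t i))" for i
  have "p ` {1..r} \<subseteq> {0..tour_weight ws Ts} \<times> {0..tour_weight wt Tt}"
    using cs(1) ct(1) by (auto simp: p_def)
  then obtain T where T: "is_tour {1..r} T"
    "tour_weight (\<lambda>i j. l1_dist (p i) (p j)) T \<le> 2 * sqrt m * (tour_weight ws Ts + tour_weight wt Tt)"
    using l1_box_tour[of "{1..r}" m p] r by (metis card_atLeastAtMost diff_Suc_1 finite_atLeastAtMost)
  have "tour_weight (\<lambda>i j. ws (s i) (s j) + wt (t i) (t j)) T \<le> tour_weight (\<lambda>i j. l1_dist (p i) (p j)) T"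
    using T(1) cs(2) ct(2) unfolding is_tour_def
    by (intro tour_weight_mono) (auto simp: l1_dist_def p_def intro: add_mono)
  then show ?thesis using T r by auto
qed

end
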